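(* Let $f\in\mathcal{F}_{1,1}$ and let $t,T$ be positive integers. There exists a function $\widetilde f:[0,1]\to\mathbb{R}$ such that: (i) $\widetilde f$ is continuous and Lipschitz with constant $1$; (ii) $\widetilde f(\frac iT)=\left\lceil Tf(\frac iT)/2^{-t}\right\rceil\frac{2^{-t}}{T}$ for $i=0,1,\dots,T$; (iii) $|\widetilde f(x)-f(x)|<\frac{2^{-t}}{T}$ for all $x\in[0,1]$.
   Context: $\mathcal{F}_{1,1}$ is the set of functions $f\in\mathscr{W}^{1,\infty}([0,1])$ (identified with their continuous representatives) with $\operatorname{ess\,sup}|f|\le1$ and $\operatorname{ess\,sup}|f'|\le1$. *)

theory Defs
  imports "HOL-Analysis.Analysis"
begin

text \<open>The class F_{1,1}: functions f in W^{1,infinity}([0,1]) (continuous representative)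
  with ess sup |f| <= 1 and ess sup |f'| <= 1.  A function on [0,1] lies in W^{1,infinity}
  with weak derivative g iff it is (a.e. equal to) an indefinite integral of an integrable
  g that is essentially bounded; we use the continuous representative f itself.
  For a continuous f, ess sup |f| <= 1 on [0,1] is the same as |f x| <= 1 for all x.\<close>

definition F11 :: "(real \<Rightarrow> real) \<Rightarrow> bool" where
  "F11 f \<longleftrightarrow>
     continuous_on {0..1} f \<and>
     (\<forall>x\<in>{0..1}. \<bar>f x\<bar> \<le> 1) \<and>
     (\<exists>g. g integrable_on {0..1} \<and>
          (AE x in lebesgue. x \<in> {0..1} \<longrightarrow> \<bar>g x\<bar> \<le> 1) \<and>
          (\<forall>x\<in>{0..1}. f x = f 0 + integral {0..x} g))"

end

theory Submission
  imports Defs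
begin

text \<open>A function in F_{1,1} is 1-Lipschitz. Rounding its grid values f(i/T) up to the lattice
  of step \<open>\<epsilon> = 2^-t/T\<close> keeps them 1-Lipschitz on the grid, because grid distances are integer
  multiples of \<open>\<epsilon>\<close>. McShane's extension interpolates the rounded values with slope 1;
  taking its maximum with f keeps it within \<open>\<epsilon>\<close> above f everywhere, since each grid value
  exceeds f by less than \<open>\<epsilon>\<close> and the cones have the same slope bound as f.\<close>

lemma integral_abs_le_if_bounded_off_negligible:
  fixes g :: "real \<Rightarrow> real"
  assumes "a \<le> b" "0 \<le> B" "g integrable_on {a..b}" "negligible N"
    and bound: "\<And>x. x \<in> {a..b} - N \<Longrightarrow> \<bar>g x\<bar> \<le> B"
  shows "\<bar>integral {a..b} g\<bar> \<le> B * (b - a)"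
proof -
  define g' where "g' x = (if x \<in> N then 0 else g x)" for x
  have "integral {a..b} g = integral {a..b} g'"
    using assms(4) by (rule integral_spike) (simp add: g'_def)
  also have "\<bar>\<dots>\<bar> \<le> integral {a..b} (\<lambda>_. B)"
    unfolding real_norm_def[symmetric]
  proof (rule integral_norm_bound_integral)
    show "g' integrable_on {a..b}"
      using assms(3,4) by (rule integrable_spike) (simp add: g'_def)
    show "norm (g' x) \<le> B" if "x \<in> {a..b}" for x
      using that bound \<open>0 \<le> B\<close> by (simp add: g'_def)
  qed (rule integrable_on_const, simp)
  also have "\<dots> = B * (b - a)"
    using \<open>a \<le> b\<close> by simp
  finally show ?thesis .
qed

lemma F11_imp_lipschitz:
  assumes "F11 f"
  shows "1-lipschitz_on {0..1} f"
proof -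
  obtain g where g_int: "g integrable_on {0..1}"
    and g_bounded: "AE x in lebesgue. x \<in> {0..1} \<longrightarrow> \<bar>g x\<bar> \<le> 1"
    and f_eq: "\<forall>x\<in>{0..1}. f x = f 0 + integral {0..x} g"
    using assms unfolding F11_def by blast
  obtain N where "negligible N" and N: "{x. \<not> (x \<in> {0..1} \<longrightarrow> \<bar>g x\<bar> \<le> 1)} \<subseteq> N"
    using g_bounded by (auto simp: eventually_ae_filter_negligible)
  then have g_le_1: "\<bar>g x\<bar> \<le> 1" if "x \<in> {0..1} - N" for x
    using that by blast
  show ?thesis
  proof (rule lipschitz_on_leI)
    fix x y :: real
    assume xy: "x \<in> {0..1}" "y \<in> {0..1}" "x \<le> y"
    have "integral {0..x} g + integral {x..y} g = integral {0..y} g"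
      using xy by (intro Henstock_Kurzweil_Integration.integral_combine integrable_on_subinterval[OF g_int]) auto
    moreover have "f y = f 0 + integral {0..y} g" "f x = f 0 + integral {0..x} g"
      using f_eq xy by blast+
    ultimately have "f y - f x = integral {x..y} g"
      by linarith
    moreover have "\<bar>integral {x..y} g\<bar> \<le> 1 * (y - x)"
      using xy g_le_1 \<open>negligible N\<close>
      by (intro integral_abs_le_if_bounded_off_negligible integrable_on_subinterval[OF g_int]) auto
    ultimately show "dist (f x) (f y) \<le> 1 * dist x y"
      using xy by (simp add: dist_real_def abs_minus_commute)
  qed simp
qed

lemma lipschitz_on_max:
  fixes f g :: "'a::metric_space \<Rightarrow> real"
  assumes "L-lipschitz_on S f" "L-lipschitz_on S g"
  shows "L-lipschitz_on S (\<lambda>x. max (f x) (g x))"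
proof (rule lipschitz_onI)
  fix x y
  assume "x \<in> S" "y \<in> S"
  then have "\<bar>f x - f y\<bar> \<le> L * dist x y" "\<bar>g x - g y\<bar> \<le> L * dist x y"
    using assms by (auto dest: lipschitz_onD simp: dist_real_def)
  then show "dist (max (f x) (g x)) (max (f y) (g y)) \<le> L * dist x y"
    by (simp add: dist_real_def max_def abs_le_iff)
qed (rule lipschitz_on_nonneg[OF assms(1)])

lemma lipschitz_on_Max:
  fixes h :: "'i \<Rightarrow> 'a::metric_space \<Rightarrow> real"
  assumes "finite I" "I \<noteq> {}" "\<And>i. i \<in> I \<Longrightarrow> L-lipschitz_on S (h i)"
  shows "L-lipschitz_on S (\<lambda>x. Max ((\<lambda>i. h i x) ` I))"
  using assms
proof (induction I rule: finite_ne_induct)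
  case (singleton i)
  then show ?case by simp
next
  case (insert i I)
  then show ?case
    by (simp add: Max_insert lipschitz_on_max)
qed

lemma lipschitz_interpolant_above:
  fixes f y :: "'a::metric_space \<Rightarrow> real"
  assumes f_lip: "L-lipschitz_on S f"
    and P: "finite P" "P \<noteq> {}" "P \<subseteq> S"
    and y_lip: "\<And>p q. p \<in> P \<Longrightarrow> q \<in> P \<Longrightarrow> y p \<le> y q + L * dist p q"
    and y_above: "\<And>p. p \<in> P \<Longrightarrow> f p \<le> y p"
    and y_close: "\<And>p. p \<in> P \<Longrightarrow> y p < f p + \<epsilon>"
  shows "\<exists>F. L-lipschitz_on S F \<and> (\<forall>p\<in>P. F p = y p) \<and> (\<forall>x\<in>S. f x \<le> F x \<and> F x < f x + \<epsilon>)"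
proof -
  have "0 \<le> L"
    using f_lip by (rule lipschitz_on_nonneg)
  define cone where "cone p x = y p - L * dist x p" for p x
  define G where "G x = Max ((\<lambda>p. cone p x) ` P)" for x
  have G_ge: "cone p x \<le> G x" if "p \<in> P" for p x
    using P that unfolding G_def by (intro Max_ge) auto
  have cone_lip: "L-lipschitz_on S (cone p)" for p
  proof (rule lipschitz_onI)
    fix x z
    have "\<bar>dist x p - dist z p\<bar> \<le> dist x z"
      using abs_dist_diff_le[of x p z] by (simp add: dist_commute)
    moreover have "dist (cone p x) (cone p z) = \<bar>L * (dist z p - dist x p)\<bar>"
      by (simp add: cone_def dist_real_def algebra_simps)
    then have "dist (cone p x) (cone p z) = L * \<bar>dist x p - dist z p\<bar>"
      using \<open>0 \<le> L\<close> by (simp add: abs_mult abs_minus_commute)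
    ultimately show "dist (cone p x) (cone p z) \<le> L * dist x z"
      using \<open>0 \<le> L\<close> by (simp add: mult_left_mono)
  qed (rule \<open>0 \<le> L\<close>)
  have G_lip: "L-lipschitz_on S G"
    unfolding G_def using P by (intro lipschitz_on_Max cone_lip)
  have G_at: "G p = y p" if "p \<in> P" for p
  proof (rule antisym)
    have "cone q p \<le> y p" if "q \<in> P" for q
      using y_lip[OF that \<open>p \<in> P\<close>] by (simp add: cone_def dist_commute)
    then show "G p \<le> y p"
      using P unfolding G_def by (subst Max_le_iff) auto
    show "y p \<le> G p"
      using G_ge[OF that, of p] by (simp add: cone_def)
  qed
  have G_close: "G x < f x + \<epsilon>" if "x \<in> S" for x
  proof -
    have "G x \<in> (\<lambda>p. cone p x) ` P"
      unfolding G_def using P by (intro Max_in) auto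
    then obtain p where p: "p \<in> P" "G x = cone p x"
      by blast
    have "f p \<le> f x + L * dist x p"
      using lipschitz_onD[OF f_lip, of p x] p(1) P(3) that by (auto simp: dist_real_def dist_commute)
    then show ?thesis
      using p y_close[OF p(1)] by (simp add: cone_def)
  qed
  show ?thesis
  proof (intro exI conjI ballI)
    show "L-lipschitz_on S (\<lambda>x. max (f x) (G x))"
      using f_lip G_lip by (rule lipschitz_on_max)
    show "max (f p) (G p) = y p" if "p \<in> P" for p
      using that G_at y_above by simp
    obtain p where "p \<in> P"
      using P(2) by blast
    then have "0 < \<epsilon>"
      using y_above y_close by fastforce
    then show "f x \<le> max (f x) (G x)" "max (f x) (G x) < f x + \<epsilon>" if "x \<in> S" for x
      using G_close[OF that] by auto
  qed
qed

definition round_up_to :: "real \<Rightarrow> real \<Rightarrow> real" where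
  "round_up_to \<epsilon> v = of_int \<lceil>v / \<epsilon>\<rceil> * \<epsilon>"

lemma round_up_to_bounds:
  assumes "0 < \<epsilon>"
  shows "v \<le> round_up_to \<epsilon> v" "round_up_to \<epsilon> v < v + \<epsilon>"
proof -
  have "v / \<epsilon> \<le> of_int \<lceil>v / \<epsilon>\<rceil>"
    by (rule le_of_int_ceiling)
  then show "v \<le> round_up_to \<epsilon> v"
    unfolding round_up_to_def using assms by (metis pos_divide_le_eq)
  have "of_int \<lceil>v / \<epsilon>\<rceil> < v / \<epsilon> + 1"
    by linarith
  then show "round_up_to \<epsilon> v < v + \<epsilon>"
    using assms by (simp add: round_up_to_def pos_less_divide_eq field_simps)
qed

lemma round_up_to_mono:
  assumes "0 < \<epsilon>" "v \<le> w"
  shows "round_up_to \<epsilon> v \<le> round_up_to \<epsilon> w"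
  using assms by (simp add: round_up_to_def ceiling_mono divide_right_mono)

lemma round_up_to_add_multiple:
  assumes "\<epsilon> \<noteq> 0"
  shows "round_up_to \<epsilon> (v + of_int k * \<epsilon>) = round_up_to \<epsilon> v + of_int k * \<epsilon>"
  using assms by (simp add: round_up_to_def add_divide_distrib distrib_right)

lemma round_up_to_lipschitz_at:
  assumes "0 < \<epsilon>" "L-lipschitz_on S f" "p \<in> S" "q \<in> S" "L * dist p q = of_int k * \<epsilon>"
  shows "round_up_to \<epsilon> (f p) \<le> round_up_to \<epsilon> (f q) + L * dist p q"
proof -
  have "f p \<le> f q + of_int k * \<epsilon>"
    using lipschitz_onD[OF assms(2,3,4)] assms(5) by (simp add: dist_real_def)
  then have "round_up_to \<epsilon> (f p) \<le> round_up_to \<epsilon> (f q + of_int k * \<epsilon>)"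
    by (rule round_up_to_mono[OF assms(1)])
  then show ?thesis
    using assms(1,5) by (simp add: round_up_to_add_multiple)
qed

lemma dist_grid_points_eq_multiple:
  assumes "T > 0"
  shows "dist (real i / real T) (real j / real T) =
    of_int (\<bar>int i - int j\<bar> * 2 ^ t) * (2 powr - real t / real T)"
proof -
  have "(2::real) ^ t * 2 powr - real t = 1"
    by (simp add: powr_minus powr_realpow)
  then show ?thesis
    using assms by (simp add: dist_real_def diff_divide_distrib[symmetric] abs_divide field_simps)
qed

lemma round_up_to_lipschitz_on_grid:
  fixes t T :: nat
  assumes "T > 0" "1-lipschitz_on {0..1} f"
    and "p \<in> (\<lambda>i. real i / real T) ` {0..T}" "q \<in> (\<lambda>i. real i / real T) ` {0..T}"
  defines "\<epsilon> \<equiv> 2 powr - real t / real T"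
  shows "round_up_to \<epsilon> (f p) \<le> round_up_to \<epsilon> (f q) + 1 * dist p q"
proof -
  have "0 < \<epsilon>"
    using \<open>T > 0\<close> by (simp add: \<epsilon>_def)
  obtain i j where ij: "i \<le> T" "j \<le> T" and pq: "p = real i / real T" "q = real j / real T"
    using assms(3,4) by auto
  have "p \<in> {0..1}" "q \<in> {0..1}"
    unfolding pq using ij \<open>T > 0\<close> by (auto simp: field_simps)
  moreover have "1 * dist p q = of_int (\<bar>int i - int j\<bar> * 2 ^ t) * \<epsilon>"
    unfolding pq using dist_grid_points_eq_multiple[OF \<open>T > 0\<close>] by (simp add: \<epsilon>_def)
  ultimately show ?thesis
    by (rule round_up_to_lipschitz_at[OF \<open>0 < \<epsilon>\<close> assms(2)])
qed

theorem proposition4: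
  fixes f :: "real \<Rightarrow> real" and t T :: nat
  assumes "F11 f" and "t > 0" and "T > 0"
  shows "\<exists>ft :: real \<Rightarrow> real.
           continuous_on {0..1} ft \<and> 1-lipschitz_on {0..1} ft \<and>
           (\<forall>i\<in>{0..T}. ft (real i / real T) =
              real_of_int \<lceil>real T * f (real i / real T) / (2 powr - real t)\<rceil>
                * (2 powr - real t) / real T) \<and>
           (\<forall>x\<in>{0..1}. \<bar>ft x - f x\<bar> < (2 powr - real t) / real T)"
proof -
  define \<epsilon> where "\<epsilon> = 2 powr - real t / real T"
  define grid where "grid = (\<lambda>i. real i / real T) ` {0..T}"
  have "0 < \<epsilon>"
    using \<open>T > 0\<close> by (simp add: \<epsilon>_def)
  have f_lip: "1-lipschitz_on {0..1} f"
    using \<open>F11 f\<close> by (rule F11_imp_lipschitz)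
  have "finite grid" "grid \<noteq> {}"
    by (simp_all add: grid_def)
  moreover have "grid \<subseteq> {0..1}"
    using \<open>T > 0\<close> by (auto simp: grid_def field_simps)
  moreover note round_up_to_lipschitz_on_grid[OF \<open>T > 0\<close> f_lip, of _ _ t, folded grid_def \<epsilon>_def]
  ultimately have "\<exists>F. 1-lipschitz_on {0..1} F \<and> (\<forall>p\<in>grid. F p = round_up_to \<epsilon> (f p)) \<and>
      (\<forall>x\<in>{0..1}. f x \<le> F x \<and> F x < f x + \<epsilon>)"
    by (rule lipschitz_interpolant_above[OF f_lip _ _ _ _ round_up_to_bounds[OF \<open>0 < \<epsilon>\<close>]])
  then obtain F where F_lip: "1-lipschitz_on {0..1} F"
    and F_grid: "\<forall>p\<in>grid. F p = round_up_to \<epsilon> (f p)"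
    and F_close: "\<forall>x\<in>{0..1}. f x \<le> F x \<and> F x < f x + \<epsilon>"
    by blast
  show ?thesis
  proof (intro exI conjI ballI)
    show "continuous_on {0..1} F"
      using F_lip by (rule lipschitz_on_continuous_on)
    show "1-lipschitz_on {0..1} F"
      by (rule F_lip)
    show "F (real i / real T) = real_of_int \<lceil>real T * f (real i / real T) / (2 powr - real t)\<rceil>
        * (2 powr - real t) / real T" if "i \<in> {0..T}" for i
      using F_grid that by (simp add: grid_def round_up_to_def \<epsilon>_def field_simps)
    show "\<bar>F x - f x\<bar> < 2 powr - real t / real T" if "x \<in> {0..1}" for x
      using F_close that by (fastforce simp: \<epsilon>_def)
  qed
qed

end
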